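(* Let $\mathcal S$ be a trajectory set and fix $n\in\mathbb N$. Define for $S\in\mathcal S$ $$\tau(S):=\min\Big(\inf\{j\in\{1,\dots,n\}:\ \mathcal S_{(S,j-1)}\text{ is an arbitrage node of type I and }S_j\neq S_{j-1}\},\ n+1\Big)$$ (with $\inf\emptyset=+\infty$). Then: (i) for every $S\in\mathcal S$ and $i\in\{0,\dots,n\}$, if $\tau(S)>i$ then there exists $\tilde S\in\mathcal S\setminus\mathcal N_n$ with $(S_0,\dots,S_i)=(\tilde S_0,\dots,\tilde S_i)$; (ii) in the reduced trajectory set $\tilde{\mathcal S}:=\mathcal S\setminus\mathcal N_n$, for every $i\le n-1$ and $S\in\tilde{\mathcal S}$, the node $\tilde{\mathcal S}_{(S,i)}$ (computed in $\tilde{\mathcal S}$) is an up-down node if $\mathcal S_{(S,i)}$ is an up-down node in $\mathcal S$, and it is flat if $\mathcal S_{(S,i)}$ is flat or an arbitrage node of type I in $\mathcal S$.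
   Context: Fix $s_0\in\mathbb R$. A trajectory set is any set $\mathcal T$ of real sequences $S=(S_j)_{j\in\mathbb N_0}$ with $S_0=s_0$. For $S\in\mathcal T$ and $j\in\mathbb N_0$, the node (conditional space) is $\mathcal T_{(S,j)}=\{\tilde S\in\mathcal T:(\tilde S_0,\dots,\tilde S_j)=(S_0,\dots,S_j)\}$. The node $\mathcal T_{(S,j)}$ is an arbitrage node if there is $\varepsilon\in\{-1,1\}$ with $\varepsilon(\tilde S_{j+1}-S_j)\ge0$ for every $\tilde S\in\mathcal T_{(S,j)}$ and strict inequality for at least one $\tilde S\in\mathcal T_{(S,j)}$; an arbitrage node is of type I if some $S'\in\mathcal T_{(S,j)}$ has $S'_{j+1}=S_j$, and of type II otherwise. The node is flat if $\tilde S_{j+1}=S_j$ for every $\tilde S\in\mathcal T_{(S,j)}$, and up-down if it is neither flat nor an arbitrage node. For $n\in\mathbb N$, $\mathcal N_n:=\{S\in\mathcal S:\ \mathcal S_{(S,j)}\text{ is an arbitrage node of type I and }S_{j+1}\ne S_j\text{ for some }j\le n-1\}$. *)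

theory Defs
  imports Main Complex_Main
begin

type_synonym traj = "nat \<Rightarrow> real"

definition trajectory_set :: "real \<Rightarrow> traj set \<Rightarrow> bool" where
  "trajectory_set s0 T \<longleftrightarrow> (\<forall>S\<in>T. S 0 = s0)"

definition node :: "traj set \<Rightarrow> traj \<Rightarrow> nat \<Rightarrow> traj set" where
  "node T S j = {S'\<in>T. \<forall>k\<le>j. S' k = S k}"

definition arbitrage_node :: "traj set \<Rightarrow> traj \<Rightarrow> nat \<Rightarrow> bool" where
  "arbitrage_node T S j \<longleftrightarrow>
     (\<exists>\<epsilon>\<in>{-1, 1::real}.
        (\<forall>S'\<in>node T S j. \<epsilon> * (S' (Suc j) - S j) \<ge> 0) \<and>
        (\<exists>S'\<in>node T S j. \<epsilon> * (S' (Suc j) - S j) > 0))"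

definition arbitrage_node_I :: "traj set \<Rightarrow> traj \<Rightarrow> nat \<Rightarrow> bool" where
  "arbitrage_node_I T S j \<longleftrightarrow>
     arbitrage_node T S j \<and> (\<exists>S'\<in>node T S j. S' (Suc j) = S j)"

definition arbitrage_node_II :: "traj set \<Rightarrow> traj \<Rightarrow> nat \<Rightarrow> bool" where
  "arbitrage_node_II T S j \<longleftrightarrow>
     arbitrage_node T S j \<and> \<not> (\<exists>S'\<in>node T S j. S' (Suc j) = S j)"

definition flat_node :: "traj set \<Rightarrow> traj \<Rightarrow> nat \<Rightarrow> bool" where
  "flat_node T S j \<longleftrightarrow> (\<forall>S'\<in>node T S j. S' (Suc j) = S j)"

definition updown_node :: "traj set \<Rightarrow> traj \<Rightarrow> nat \<Rightarrow> bool" where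
  "updown_node T S j \<longleftrightarrow> \<not> flat_node T S j \<and> \<not> arbitrage_node T S j"

definition NN :: "traj set \<Rightarrow> nat \<Rightarrow> traj set" where
  "NN T n = {S\<in>T. \<exists>j\<le>n - 1. arbitrage_node_I T S j \<and> S (Suc j) \<noteq> S j}"

text \<open>tau(S) = min(inf A, n+1) with inf {} = infinity; since A is a subset of {1..n},
  this is Min A if A is nonempty and n+1 otherwise.\<close>
definition tau :: "traj set \<Rightarrow> nat \<Rightarrow> traj \<Rightarrow> nat" where
  "tau T n S = (let A = {j\<in>{1..n}. arbitrage_node_I T S (j - 1) \<and> S j \<noteq> S (j - 1)}
                in if A = {} then n + 1 else Min A)"

end

theory Submission
  imports Defs
begin

text \<open>Whether a node is of type I depends only on the prefix leading to
  it, and every type I node has a flat successor; so any prefix free of such moves can be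
  continued, always taking the flat branch at type I nodes, to a trajectory outside \<open>N\<^sub>n\<close>. For (ii), the successor values at a node that is not of type I survive
  the removal of \<open>N\<^sub>n\<close>, which keeps up-down nodes up-down; in the remaining trajectories every type I
  node is left along its flat branch.\<close>

definition free_of_typeI_moves :: "traj set \<Rightarrow> traj \<Rightarrow> nat \<Rightarrow> bool" where
  "free_of_typeI_moves T R m \<longleftrightarrow> (\<forall>j<m. \<not> (arbitrage_node_I T R j \<and> R (Suc j) \<noteq> R j))"

lemma node_cong:
  assumes "\<forall>k\<le>j. R k = S k"
  shows "node T R j = node T S j"
  using assms unfolding node_def by auto

lemma node_mono: "T \<subseteq> T' \<Longrightarrow> node T S j \<subseteq> node T' S j"
  unfolding node_def by auto

lemma node_agrees: "S' \<in> node T S j \<Longrightarrow> k \<le> j \<Longrightarrow> S' k = S k"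
  unfolding node_def by auto

lemma arbitrage_node_I_cong:
  assumes "\<forall>k\<le>j. R k = S k"
  shows "arbitrage_node_I T R j \<longleftrightarrow> arbitrage_node_I T S j"
  using node_cong[OF assms] assms unfolding arbitrage_node_I_def arbitrage_node_def by simp

lemma free_of_typeI_moves_cong:
  assumes "\<forall>k\<le>m. R k = S k"
  shows "free_of_typeI_moves T R m \<longleftrightarrow> free_of_typeI_moves T S m"
proof -
  have "arbitrage_node_I T R j \<and> R (Suc j) \<noteq> R j \<longleftrightarrow> arbitrage_node_I T S j \<and> S (Suc j) \<noteq> S j"
    if "j < m" for j
    using that assms arbitrage_node_I_cong[of j R S T] by simp
  then show ?thesis unfolding free_of_typeI_moves_def by blast
qed

lemma free_of_typeI_moves_mono:
  "free_of_typeI_moves T R m' \<Longrightarrow> m \<le> m' \<Longrightarrow> free_of_typeI_moves T R m"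
  unfolding free_of_typeI_moves_def by auto

lemma free_of_typeI_moves_Suc:
  "free_of_typeI_moves T R (Suc m) \<longleftrightarrow>
     free_of_typeI_moves T R m \<and> \<not> (arbitrage_node_I T R m \<and> R (Suc m) \<noteq> R m)"
  unfolding free_of_typeI_moves_def using less_Suc_eq by auto

lemma Diff_NN_eq:
  assumes "n \<ge> 1"
  shows "T - NN T n = {R \<in> T. free_of_typeI_moves T R n}"
  using assms unfolding NN_def free_of_typeI_moves_def by fastforce

lemma free_of_typeI_moves_step:
  assumes "R \<in> T" "free_of_typeI_moves T R m"
  shows "\<exists>R'\<in>T. free_of_typeI_moves T R' (Suc m) \<and> (\<forall>k\<le>m. R' k = R k)"
proof (cases "arbitrage_node_I T R m")
  case True
  then obtain R' where R': "R' \<in> node T R m" "R' (Suc m) = R m"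
    unfolding arbitrage_node_I_def by blast
  have agree: "\<forall>k\<le>m. R' k = R k" using R'(1) node_agrees by blast
  then have "free_of_typeI_moves T R' m"
    using assms(2) free_of_typeI_moves_cong by blast
  with R'(2) agree have "free_of_typeI_moves T R' (Suc m)"
    by (simp add: free_of_typeI_moves_Suc)
  moreover have "R' \<in> T" using R'(1) unfolding node_def by simp
  ultimately show ?thesis using agree by blast
next
  case False
  then show ?thesis using assms by (auto simp: free_of_typeI_moves_Suc)
qed

lemma free_of_typeI_moves_extend:
  assumes "R \<in> T" "free_of_typeI_moves T R m" "m \<le> n"
  shows "\<exists>R'\<in>T. free_of_typeI_moves T R' n \<and> (\<forall>k\<le>m. R' k = R k)"
  using assms(3,1,2)
proof (induction m arbitrary: R rule: inc_induct)
  case base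
  then show ?case by blast
next
  case (step m)
  obtain R1 where R1: "R1 \<in> T" "free_of_typeI_moves T R1 (Suc m)" "\<forall>k\<le>m. R1 k = R k"
    using free_of_typeI_moves_step[OF step.prems] by blast
  obtain R' where "R' \<in> T" "free_of_typeI_moves T R' n" "\<forall>k\<le>Suc m. R' k = R1 k"
    using step.IH[OF R1(1,2)] by blast
  then show ?case using R1(3) by (intro bexI[of _ R']) auto
qed

lemma prefix_extends_outside_NN:
  assumes "R \<in> T" "free_of_typeI_moves T R m" "m \<le> n" "n \<ge> 1"
  shows "\<exists>R'\<in>T - NN T n. \<forall>k\<le>m. R' k = R k"
  using free_of_typeI_moves_extend[OF assms(1-3)] Diff_NN_eq[OF assms(4)] by blast

lemma free_of_typeI_moves_if_tau_greater:
  assumes "tau T n S > i" "i \<le> n"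
  shows "free_of_typeI_moves T S i"
  unfolding free_of_typeI_moves_def
proof (intro allI impI notI)
  fix j assume j: "j < i" and move: "arbitrage_node_I T S j \<and> S (Suc j) \<noteq> S j"
  define A where "A = {j\<in>{1..n}. arbitrage_node_I T S (j - 1) \<and> S j \<noteq> S (j - 1)}"
  have "Suc j \<in> A" unfolding A_def using j move assms(2) by auto
  moreover have "finite A" unfolding A_def by simp
  ultimately have "tau T n S \<le> Suc j"
    unfolding tau_def A_def[symmetric] by (auto intro: Min_le)
  with assms(1) j show False by simp
qed

lemma updown_node_iff:
  "updown_node T S i \<longleftrightarrow>
     (\<exists>S'\<in>node T S i. S' (Suc i) > S i) \<and> (\<exists>S'\<in>node T S i. S' (Suc i) < S i)"
proof
  assume updown: "updown_node T S i"
  then obtain S0 where S0: "S0 \<in> node T S i" "S0 (Suc i) \<noteq> S i"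
    unfolding updown_node_def flat_node_def by auto
  have no_arbitrage: "\<not> arbitrage_node T S i" using updown unfolding updown_node_def by simp
  have "\<exists>S'\<in>node T S i. S' (Suc i) > S i"
  proof (rule ccontr)
    assume no_up: "\<not> ?thesis"
    then have "\<forall>S'\<in>node T S i. (-1::real) * (S' (Suc i) - S i) \<ge> 0"
      and "(-1::real) * (S0 (Suc i) - S i) > 0"
      using S0 by force+
    with S0(1) no_arbitrage show False unfolding arbitrage_node_def by blast
  qed
  moreover have "\<exists>S'\<in>node T S i. S' (Suc i) < S i"
  proof (rule ccontr)
    assume no_down: "\<not> ?thesis"
    then have "\<forall>S'\<in>node T S i. (1::real) * (S' (Suc i) - S i) \<ge> 0"
      and "(1::real) * (S0 (Suc i) - S i) > 0"
      using S0 by force+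
    with S0(1) no_arbitrage show False unfolding arbitrage_node_def by blast
  qed
  ultimately show "(\<exists>S'\<in>node T S i. S' (Suc i) > S i) \<and> (\<exists>S'\<in>node T S i. S' (Suc i) < S i)"
    by blast
next
  assume "(\<exists>S'\<in>node T S i. S' (Suc i) > S i) \<and> (\<exists>S'\<in>node T S i. S' (Suc i) < S i)"
  then obtain Su Sd where up: "Su \<in> node T S i" "Su (Suc i) > S i"
    and down: "Sd \<in> node T S i" "Sd (Suc i) < S i" by blast
  have "\<not> (\<forall>S'\<in>node T S i. \<epsilon> * (S' (Suc i) - S i) \<ge> 0)" if "\<epsilon> \<in> {-1, 1}" for \<epsilon> :: real
    using that
  proof (elim insertE emptyE)
    assume "\<epsilon> = -1"
    with up show ?thesis by force
  next
    assume "\<epsilon> = 1"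
    with down show ?thesis by force
  qed
  moreover have "\<not> flat_node T S i" using up unfolding flat_node_def by force
  ultimately show "updown_node T S i"
    unfolding updown_node_def arbitrage_node_def by blast
qed

lemma successor_survives_Diff_NN:
  assumes "S \<in> T - NN T n" "i < n" "\<not> arbitrage_node_I T S i" "S1 \<in> node T S i"
  shows "\<exists>R\<in>node (T - NN T n) S i. R (Suc i) = S1 (Suc i)"
proof -
  have n: "n \<ge> 1" using assms(2) by simp
  have agree: "\<forall>k\<le>i. S1 k = S k" using assms(4) node_agrees by blast
  have "free_of_typeI_moves T S i"
    using assms(1,2) Diff_NN_eq[OF n] free_of_typeI_moves_mono by auto
  then have "free_of_typeI_moves T S1 i" using free_of_typeI_moves_cong[OF agree] by simp
  moreover have "\<not> arbitrage_node_I T S1 i" using assms(3) arbitrage_node_I_cong[OF agree] by simp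
  ultimately have "free_of_typeI_moves T S1 (Suc i)" by (simp add: free_of_typeI_moves_Suc)
  moreover have "S1 \<in> T" using assms(4) unfolding node_def by simp
  ultimately obtain R where R: "R \<in> T - NN T n" "\<forall>k\<le>Suc i. R k = S1 k"
    using prefix_extends_outside_NN assms(2) n by (metis Suc_leI)
  then have "R \<in> node (T - NN T n) S i" using agree unfolding node_def by auto
  with R(2) show ?thesis by auto
qed

lemma updown_node_Diff_NN:
  assumes "S \<in> T - NN T n" "i < n" "updown_node T S i"
  shows "updown_node (T - NN T n) S i"
proof -
  have "\<not> arbitrage_node_I T S i"
    using assms(3) unfolding updown_node_def arbitrage_node_I_def by simp
  note survives = successor_survives_Diff_NN[OF assms(1,2) this]
  obtain Su Sd where "Su \<in> node T S i" "Su (Suc i) > S i" "Sd \<in> node T S i" "Sd (Suc i) < S i"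
    using assms(3) unfolding updown_node_iff by blast
  with survives[of Su] survives[of Sd] show ?thesis
    unfolding updown_node_iff by (metis (no_types, lifting))
qed

lemma flat_node_Diff_NN:
  assumes "S \<in> T - NN T n" "i < n" "flat_node T S i \<or> arbitrage_node_I T S i"
  shows "flat_node (T - NN T n) S i"
  unfolding flat_node_def
proof
  fix S' assume S': "S' \<in> node (T - NN T n) S i"
  then have "S' \<in> node T S i" using node_mono[of "T - NN T n" T] by blast
  have agree: "\<forall>k\<le>i. S' k = S k" using S' node_agrees by blast
  show "S' (Suc i) = S i"
  proof (cases "flat_node T S i")
    case True
    with \<open>S' \<in> node T S i\<close> show ?thesis unfolding flat_node_def by blast
  next
    case False
    then have "arbitrage_node_I T S' i" using assms(3) arbitrage_node_I_cong[OF agree] by simp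
    moreover have "S' \<in> T - NN T n" using S' unfolding node_def by simp
    ultimately have "S' (Suc i) = S' i" using assms(2) unfolding NN_def by auto
    with agree show ?thesis by simp
  qed
qed

theorem proposition5p5:
  fixes s0 :: real and T :: "(nat \<Rightarrow> real) set" and n :: nat
  assumes "trajectory_set s0 T" and "n \<ge> 1"
  shows "(\<forall>S\<in>T. \<forall>i\<le>n. tau T n S > i \<longrightarrow>
            (\<exists>S'\<in>T - NN T n. \<forall>k\<le>i. S' k = S k))
       \<and> (\<forall>i\<le>n - 1. \<forall>S\<in>T - NN T n.
            (updown_node T S i \<longrightarrow> updown_node (T - NN T n) S i) \<and>
            ((flat_node T S i \<or> arbitrage_node_I T S i) \<longrightarrow> flat_node (T - NN T n) S i))"
proof (intro conjI ballI allI impI)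
  fix S i assume "S \<in> T" "i \<le> n" "tau T n S > i"
  then show "\<exists>S'\<in>T - NN T n. \<forall>k\<le>i. S' k = S k"
    using prefix_extends_outside_NN free_of_typeI_moves_if_tau_greater assms(2) by blast
next
  fix i S assume "i \<le> n - 1" "S \<in> T - NN T n"
  moreover have "i < n" using \<open>i \<le> n - 1\<close> assms(2) by simp
  ultimately show "updown_node T S i \<Longrightarrow> updown_node (T - NN T n) S i"
    and "flat_node T S i \<or> arbitrage_node_I T S i \<Longrightarrow> flat_node (T - NN T n) S i"
    using updown_node_Diff_NN flat_node_Diff_NN by blast+
qed

end
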